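(* For all $\rho,\omega\in\mathcal{S}(\mathbb{C}^2)$ one has $D_z^2(\rho,\omega)\le 2-2(\mathbf{b}_\rho)_3(\mathbf{b}_\omega)_3\le 4$. Moreover, $D_z(\rho,\omega)=2$ holds if and only if $\{\rho,\omega\}=\{\tfrac12(I+\sigma_z),\tfrac12(I-\sigma_z)\}$. In particular the diameter of $\mathcal{S}(\mathbb{C}^2)$ with respect to $D_z$ equals $2$.
   Context: Let $\mathcal{H}=\mathbb{C}^2$, $\mathcal{H}^*$ its dual space, and $\mathcal{S}(\mathcal{H})$ the set of density operators on $\mathcal{H}$. For a linear operator $A$ on $\mathcal{H}$, its transpose $A^T$ is the operator on $\mathcal{H}^*$ defined by $(A^T\varphi)(x)=\varphi(Ax)$. $\mathcal{C}(\rho,\omega)=\{\Pi\in\mathcal{S}(\mathcal{H}\otimes\mathcal{H}^* ):\ \mathrm{tr}_{\mathcal{H}^*}[\Pi]=\omega,\ \mathrm{tr}_{\mathcal{H}}[\Pi]=\rho^T\}$. The Pauli matrices are $\sigma_1=\begin{bmatrix}0&1\\1&0\end{bmatrix}$, $\sigma_2=\begin{bmatrix}0&-i\\i&0\end{bmatrix}$, $\sigma_3=\sigma_z=\begin{bmatrix}1&0\\0&-1\end{bmatrix}$. $C_z=(\sigma_z\otimes I^T-I\otimes\sigma_z^T)^2$ and $D_z^2(\rho,\omega)=\inf\{\mathrm{tr}[\Pi C_z]:\Pi\in\mathcal{C}(\rho,\omega)\}$. The Bloch vector of $\rho$ is $\mathbf{b}_\rho=(\mathrm{tr}[\sigma_j\rho])_{j=1}^3$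 and $(\mathbf{b}_\rho)_3$ is its third coordinate. *)

theory Defs
  imports Complex_Main "Jordan_Normal_Form.Matrix"
begin

text \<open>Operators on H = C^2 are complex 2x2 matrices w.r.t. the standard basis; operators
on H^* are written w.r.t. the dual basis, so the transpose A^T is the matrix transpose.
Operators on H (x) H^* are 4x4 matrices, basis vector e_i (x) e_j^* having index 2*i+j.\<close>

definition mtrace :: "complex mat \<Rightarrow> complex" where
  "mtrace A = (\<Sum>i<dim_row A. A $$ (i, i))"

definition density :: "nat \<Rightarrow> complex mat \<Rightarrow> bool" where
  "density n A \<longleftrightarrow> A \<in> carrier_mat n n \<and> mtrace A = 1 \<and>
     (\<forall>v \<in> carrier_vec n. Im (conjugate v \<bullet> (A *\<^sub>v v)) = 0 \<and> Re (conjugate v \<bullet> (A *\<^sub>v v)) \<ge> 0)"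

definition kron2 :: "complex mat \<Rightarrow> complex mat \<Rightarrow> complex mat" where
  "kron2 A B = mat 4 4 (\<lambda>(r, c). A $$ (r div 2, c div 2) * B $$ (r mod 2, c mod 2))"

definition ptrace_dual :: "complex mat \<Rightarrow> complex mat" where
  "ptrace_dual P = mat 2 2 (\<lambda>(i, j). \<Sum>k<2. P $$ (2*i + k, 2*j + k))"

definition ptrace_H :: "complex mat \<Rightarrow> complex mat" where
  "ptrace_H P = mat 2 2 (\<lambda>(i, j). \<Sum>k<2. P $$ (2*k + i, 2*k + j))"

definition couplings :: "complex mat \<Rightarrow> complex mat \<Rightarrow> complex mat set" where
  "couplings \<rho> \<omega> = {P. density 4 P \<and> ptrace_dual P = \<omega> \<and> ptrace_H P = transpose_mat \<rho>}"

definition sigma_z :: "complex mat" where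
  "sigma_z = mat_of_rows_list 2 [[1, 0], [0, -1]]"

definition C_z :: "complex mat" where
  "C_z = (let M = kron2 sigma_z (1\<^sub>m 2) - kron2 (1\<^sub>m 2) (transpose_mat sigma_z) in M * M)"

definition Dz_sq :: "complex mat \<Rightarrow> complex mat \<Rightarrow> real" where
  "Dz_sq \<rho> \<omega> = Inf ((\<lambda>P. Re (mtrace (P * C_z))) ` couplings \<rho> \<omega>)"

definition Dz :: "complex mat \<Rightarrow> complex mat \<Rightarrow> real" where
  "Dz \<rho> \<omega> = sqrt (Dz_sq \<rho> \<omega>)"

definition bloch3 :: "complex mat \<Rightarrow> real" where
  "bloch3 \<rho> = Re (mtrace (sigma_z * \<rho>))"

end

theory Submission
  imports Defs
begin

text \<open>The cost matrix C_z is diag(0, 4, 4, 0), so a coupling P costs 4 (P11 + P22), the weight it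
puts on the two outcomes where the sigma_z values differ. The product coupling of omega and
rho^T costs exactly 2 - 2 b_rho b_omega, giving the upper bound; it is a state because
2x2 densities factor as X^* X, which makes its quadratic form a sum of squared norms.
Conversely, the marginal constraints force P22 - P11 = (b_rho - b_omega) / 2 for every
coupling, so D_z^2 >= 2 |b_rho - b_omega|. With |b| <= 1 both bounds equal 4 precisely when
the two z-coordinates are 1 and -1, i.e. for the two eigenprojections of sigma_z.\<close>

lemma sum_lessThan_2: "(\<Sum>i<(2::nat). f i) = f 0 + (f 1 :: 'a::comm_monoid_add)"
  by (simp add: eval_nat_numeral add.commute)

lemma sum_lessThan_4: "(\<Sum>i<(4::nat). f i) = f 0 + f 1 + f 2 + (f 3 :: 'a::comm_monoid_add)"
  by (simp add: eval_nat_numeral add.commute add.left_commute)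

lemma less_2_iff: "(i::nat) < 2 \<longleftrightarrow> i = 0 \<or> i = 1"
  by auto

lemma less_4_iff: "(i::nat) < 4 \<longleftrightarrow> i = 0 \<or> i = 1 \<or> i = 2 \<or> i = 3"
  by auto

lemma mtrace_transpose: "A \<in> carrier_mat n n \<Longrightarrow> mtrace (transpose_mat A) = mtrace A"
  by (simp add: mtrace_def)

lemma density_diag:
  assumes "density n A" "i < n"
  shows "Im (A $$ (i, i)) = 0" "0 \<le> Re (A $$ (i, i))"
proof -
  have A: "A \<in> carrier_mat n n" using assms(1) by (simp add: density_def)
  have "conjugate (unit_vec n i) = (unit_vec n i :: complex vec)"
    by (rule eq_vecI) (simp_all add: unit_vec_def)
  then have "conjugate (unit_vec n i) \<bullet> (A *\<^sub>v unit_vec n i) = A $$ (i, i)"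
    using A assms(2) by simp
  then show "Im (A $$ (i, i)) = 0" "0 \<le> Re (A $$ (i, i))"
    using assms(1) unit_vec_carrier unfolding density_def by metis+
qed

lemma quadratic_form_transpose:
  fixes A :: "complex mat"
  assumes "A \<in> carrier_mat n n" "v \<in> carrier_vec n"
  shows "conjugate v \<bullet> (transpose_mat A *\<^sub>v v) = conjugate (conjugate v) \<bullet> (A *\<^sub>v conjugate v)"
proof -
  have "conjugate v \<bullet> (transpose_mat A *\<^sub>v v) = (\<Sum>i<n. \<Sum>j<n. cnj (v $ i) * A $$ (j, i) * v $ j)"
    using assms by (simp add: scalar_prod_def atLeast0LessThan sum_distrib_left mult.assoc)
  also have "\<dots> = (\<Sum>j<n. \<Sum>i<n. v $ j * A $$ (j, i) * cnj (v $ i))"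
    by (subst sum.swap) (simp add: mult.commute mult.left_commute)
  also have "\<dots> = conjugate (conjugate v) \<bullet> (A *\<^sub>v conjugate v)"
    using assms by (simp add: scalar_prod_def atLeast0LessThan sum_distrib_left mult.assoc)
  finally show ?thesis .
qed

lemma density_transpose: "density n A \<Longrightarrow> density n (transpose_mat A)"
  unfolding density_def
  by (metis (no_types) carrier_vec_conjugate mtrace_transpose quadratic_form_transpose transpose_carrier_mat)

lemma quadratic_form_2:
  fixes A :: "complex mat"
  assumes "A \<in> carrier_mat 2 2" "v \<in> carrier_vec 2"
  shows "conjugate v \<bullet> (A *\<^sub>v v) =
    cnj (v $ 0) * (A $$ (0, 0) * v $ 0 + A $$ (0, 1) * v $ 1)
    + cnj (v $ 1) * (A $$ (1, 0) * v $ 0 + A $$ (1, 1) * v $ 1)"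
  using assms by (simp add: scalar_prod_def atLeast0LessThan sum_lessThan_2)

lemma density2_quadratic_form:
  fixes x y :: complex
  assumes "density 2 A"
  defines "q \<equiv> cnj x * (A $$ (0, 0) * x + A $$ (0, 1) * y) + cnj y * (A $$ (1, 0) * x + A $$ (1, 1) * y)"
  shows "Im q = 0" "0 \<le> Re q"
proof -
  define v where "v = vec 2 (\<lambda>i. if i = 0 then x else y)"
  have "v \<in> carrier_vec 2" by (simp add: v_def)
  moreover have "A \<in> carrier_mat 2 2" using assms(1) by (simp add: density_def)
  ultimately have "conjugate v \<bullet> (A *\<^sub>v v) = q"
    by (simp add: quadratic_form_2 q_def v_def)
  then show "Im q = 0" "0 \<le> Re q"
    using assms(1) \<open>v \<in> carrier_vec 2\<close> unfolding density_def by metis+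
qed

lemma density2_hermitian: "density 2 A \<Longrightarrow> A $$ (1, 0) = cnj (A $$ (0, 1))"
  using density2_quadratic_form[of A 1 1] density2_quadratic_form[of A 1 \<i>]
    density_diag[of 2 A 0] density_diag[of 2 A 1]
  by (simp add: complex_eq_iff)

lemma density2_trace: "density 2 A \<Longrightarrow> Re (A $$ (0, 0)) + Re (A $$ (1, 1)) = 1"
  by (auto simp: density_def mtrace_def sum_lessThan_2 complex_eq_iff)

lemma density2_offdiag_bound:
  assumes A: "density 2 A"
  shows "(cmod (A $$ (0, 1)))\<^sup>2 \<le> Re (A $$ (0, 0)) * Re (A $$ (1, 1))"
proof -
  define a d b where "a = Re (A $$ (0, 0))" and "d = Re (A $$ (1, 1))" and "b = A $$ (0, 1)"
  have form_nonneg: "0 \<le> a * (cmod x)\<^sup>2 + d * (cmod y)\<^sup>2 + 2 * Re (cnj x * b * y)" for x y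
  proof -
    have "A $$ (0, 0) = of_real a" "A $$ (1, 1) = of_real d" "A $$ (1, 0) = cnj b" "A $$ (0, 1) = b"
      using density_diag[OF A] density2_hermitian[OF A] by (auto simp: a_def d_def b_def complex_eq_iff)
    then show ?thesis
      using density2_quadratic_form(2)[OF A, of x y]
      unfolding cmod_power2 by (simp add: algebra_simps power2_eq_square)
  qed
  \<comment> \<open>On (x, y) = (-t b, s) the form is a real binary quadratic form; its nonnegativity is the
    discriminant condition |b|^2 <= a d.\<close>
  have binary_nonneg: "0 \<le> a * t\<^sup>2 * (cmod b)\<^sup>2 + d * s\<^sup>2 - 2 * t * s * (cmod b)\<^sup>2" for t s
  proof -
    have n: "(cmod (- of_real t * b))\<^sup>2 = t\<^sup>2 * (cmod b)\<^sup>2"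
      by (simp add: norm_mult power_mult_distrib)
    have r: "cnj (- of_real t * b) * b * of_real s = of_real (- t * s * (cmod b)\<^sup>2)"
      by (simp add: mult.commute mult.left_commute flip: complex_norm_square)
    show ?thesis using form_nonneg[of "- of_real t * b" "of_real s"] unfolding n r by simp
  qed
  have "0 \<le> a" using density_diag[OF A, of 0] by (simp add: a_def)
  then consider "0 < a" | "a = 0" by linarith
  then have "(cmod b)\<^sup>2 \<le> a * d"
  proof cases
    case 1
    with binary_nonneg[of 1 a] show ?thesis
      by (simp add: power2_eq_square algebra_simps mult_le_cancel_left_pos)
  next
    case 2
    show ?thesis
    proof (rule ccontr)
      assume "\<not> (cmod b)\<^sup>2 \<le> a * d"
      with 2 have "0 < (cmod b)\<^sup>2" by simp
      with 2 binary_nonneg[of "(d + 1) / (2 * (cmod b)\<^sup>2)" 1] show False by (simp add: field_simps)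
    qed
  qed
  then show ?thesis by (simp add: a_def b_def d_def)
qed

lemma density2_offdiag_eq_0:
  assumes A: "density 2 A" and "Re (A $$ (0, 0)) * Re (A $$ (1, 1)) = 0"
  shows "A $$ (0, 1) = 0" "A $$ (1, 0) = 0"
proof -
  have "(cmod (A $$ (0, 1)))\<^sup>2 \<le> 0"
    using density2_offdiag_bound[OF A] unfolding assms(2) .
  then show "A $$ (0, 1) = 0" by simp
  then show "A $$ (1, 0) = 0" using density2_hermitian[OF A] by simp
qed

lemma mtrace_kron2:
  "A \<in> carrier_mat 2 2 \<Longrightarrow> B \<in> carrier_mat 2 2 \<Longrightarrow> mtrace (kron2 A B) = mtrace A * mtrace B"
  by (simp add: mtrace_def kron2_def sum_lessThan_2 sum_lessThan_4 algebra_simps)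

lemma density2_gram:
  assumes A: "density 2 A"
  obtains X :: "nat \<Rightarrow> nat \<Rightarrow> complex"
  where "\<And>i j. i < 2 \<Longrightarrow> j < 2 \<Longrightarrow> A $$ (i, j) = (\<Sum>m<2. cnj (X m i) * X m j)"
proof -
  define a d b where "a = Re (A $$ (0, 0))" and "d = Re (A $$ (1, 1))" and "b = A $$ (0, 1)"
  have e: "A $$ (0, 0) = of_real a" "A $$ (1, 1) = of_real d" "A $$ (1, 0) = cnj b" "A $$ (0, 1) = b"
    using density_diag[OF A] density2_hermitian[OF A] by (auto simp: a_def d_def b_def complex_eq_iff)
  have bnd: "(cmod b)\<^sup>2 \<le> a * d"
    using density2_offdiag_bound[OF A] by (simp add: a_def d_def b_def)
  have "0 \<le> a" "0 \<le> d"
    using density_diag[OF A, of 0] density_diag[OF A, of 1] by (auto simp: a_def d_def)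
  have "\<exists>X :: nat \<Rightarrow> nat \<Rightarrow> complex. \<forall>i<2. \<forall>j<2. A $$ (i, j) = (\<Sum>m<2. cnj (X m i) * X m j)"
  proof (cases "a = 0")
    case True
    then have "b = 0" using bnd by simp
    define X :: "nat \<Rightarrow> nat \<Rightarrow> complex"
      where "X m j = (if m = 0 \<or> j = 0 then 0 else complex_of_real (sqrt d))" for m j
    have "A $$ (0, 0) = (\<Sum>m<2. cnj (X m 0) * X m 0)"
      "A $$ (0, 1) = (\<Sum>m<2. cnj (X m 0) * X m 1)"
      "A $$ (1, 0) = (\<Sum>m<2. cnj (X m 1) * X m 0)"
      using True \<open>b = 0\<close> by (simp_all add: X_def e sum_lessThan_2 del: One_nat_def)
    moreover have "A $$ (1, 1) = (\<Sum>m<2. cnj (X m 1) * X m 1)"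
    proof -
      have "(\<Sum>m<2. cnj (X m 1) * X m 1) = of_real (sqrt d) * of_real (sqrt d)"
        by (simp add: X_def sum_lessThan_2)
      also have "\<dots> = A $$ (1, 1)"
        unfolding e of_real_mult[symmetric] real_sqrt_mult_self abs_of_nonneg[OF \<open>0 \<le> d\<close>] ..
      finally show ?thesis ..
    qed
    ultimately show ?thesis by (intro exI[of _ X]) (auto simp: less_2_iff)
  next
    case False
    \<comment> \<open>Cholesky factor: the rows are (r, b / r) and (0, t).\<close>
    define r t where "r = sqrt a" and "t = sqrt (d - (cmod b)\<^sup>2 / a)"
    have r: "r * r = a" "r > 0" using False \<open>0 \<le> a\<close> by (auto simp: r_def)
    have "(cmod b)\<^sup>2 / a \<le> d" using bnd False \<open>0 \<le> a\<close> by (simp add: divide_le_eq mult.commute)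
    then have t: "t * t = d - (cmod b)\<^sup>2 / a" by (simp add: t_def)
    define X :: "nat \<Rightarrow> nat \<Rightarrow> complex"
      where "X m j = (if m = 0 then (if j = 0 then complex_of_real r else b / of_real r)
                      else (if j = 0 then 0 else complex_of_real t))" for m j
    have "A $$ (0, 0) = (\<Sum>m<2. cnj (X m 0) * X m 0)"
      using r by (simp add: X_def e sum_lessThan_2 flip: of_real_mult)
    moreover have "A $$ (0, 1) = (\<Sum>m<2. cnj (X m 0) * X m 1)"
      "A $$ (1, 0) = (\<Sum>m<2. cnj (X m 1) * X m 0)"
      using r by (simp_all add: X_def e sum_lessThan_2 del: One_nat_def)
    moreover have "A $$ (1, 1) = (\<Sum>m<2. cnj (X m 1) * X m 1)"
    proof -
      have "(\<Sum>m<2. cnj (X m 1) * X m 1) = cnj b * b / (of_real r * of_real r) + of_real t * of_real t"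
        by (simp add: X_def sum_lessThan_2)
      also have "\<dots> = A $$ (1, 1)"
        unfolding e of_real_mult[symmetric] r(1) t
        by (simp add: mult.commute flip: complex_norm_square)
      finally show ?thesis ..
    qed
    ultimately show ?thesis by (intro exI[of _ X]) (auto simp: less_2_iff)
  qed
  then show ?thesis using that by blast
qed

lemma quadratic_form_4:
  fixes P :: "complex mat"
  assumes "P \<in> carrier_mat 4 4" "v \<in> carrier_vec 4"
  shows "conjugate v \<bullet> (P *\<^sub>v v) = (\<Sum>r<4. cnj (v $ r) * (\<Sum>c<4. P $$ (r, c) * v $ c))"
  using assms by (simp add: scalar_prod_def atLeast0LessThan)

lemma kron2_gram_form:
  fixes X Y V :: "nat \<Rightarrow> nat \<Rightarrow> complex"
  defines "w i k \<equiv> \<Sum>j<2. \<Sum>l<2. X i j * Y k l * V j l"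
  shows "(\<Sum>r<4. cnj (V (r div 2) (r mod 2)) *
            (\<Sum>c<4. (\<Sum>m<2. cnj (X m (r div 2)) * X m (c div 2))
              * (\<Sum>m<2. cnj (Y m (r mod 2)) * Y m (c mod 2)) * V (c div 2) (c mod 2)))
       = (\<Sum>i<2. \<Sum>k<2. cnj (w i k) * w i k)"
  unfolding w_def by (simp add: sum_lessThan_2 sum_lessThan_4 algebra_simps)

lemma density_kron2:
  assumes A: "density 2 A" and B: "density 2 B"
  shows "density 4 (kron2 A B)"
proof -
  have K: "kron2 A B \<in> carrier_mat 4 4" by (simp add: kron2_def)
  obtain X :: "nat \<Rightarrow> nat \<Rightarrow> complex"
    where X: "\<And>i j. i < 2 \<Longrightarrow> j < 2 \<Longrightarrow> A $$ (i, j) = (\<Sum>m<2. cnj (X m i) * X m j)"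
    using density2_gram[OF A] by blast
  obtain Y :: "nat \<Rightarrow> nat \<Rightarrow> complex"
    where Y: "\<And>i j. i < 2 \<Longrightarrow> j < 2 \<Longrightarrow> B $$ (i, j) = (\<Sum>m<2. cnj (Y m i) * Y m j)"
    using density2_gram[OF B] by blast
  have "Im (conjugate v \<bullet> (kron2 A B *\<^sub>v v)) = 0 \<and> 0 \<le> Re (conjugate v \<bullet> (kron2 A B *\<^sub>v v))"
    if v: "v \<in> carrier_vec 4" for v
  proof -
    define V where "V j l = v $ (2 * j + l)" for j l
    define w where "w i k = (\<Sum>j<2. \<Sum>l<2. X i j * Y k l * V j l)" for i k
    have "conjugate v \<bullet> (kron2 A B *\<^sub>v v) =
      (\<Sum>r<4. cnj (V (r div 2) (r mod 2)) *
        (\<Sum>c<4. (\<Sum>m<2. cnj (X m (r div 2)) * X m (c div 2))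
          * (\<Sum>m<2. cnj (Y m (r mod 2)) * Y m (c mod 2)) * V (c div 2) (c mod 2)))"
      unfolding quadratic_form_4[OF K v]
      by (intro sum.cong refl arg_cong2[where f = "(*)"]) (simp_all add: kron2_def V_def X Y)
    also have "\<dots> = (\<Sum>i<2. \<Sum>k<2. cnj (w i k) * w i k)"
      unfolding kron2_gram_form w_def ..
    also have "\<dots> = of_real (\<Sum>i<2. \<Sum>k<2. (cmod (w i k))\<^sup>2)"
      by (simp add: mult.commute flip: complex_norm_square)
    finally show ?thesis by (simp add: sum_nonneg)
  qed
  moreover have "mtrace (kron2 A B) = 1"
    using A B mtrace_kron2 unfolding density_def by simp
  ultimately show ?thesis
    unfolding density_def using K by blast
qed

lemma sigma_z_carrier: "sigma_z \<in> carrier_mat 2 2"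
  by (simp add: sigma_z_def mat_of_rows_list_def numeral_2_eq_2)

lemma index_sigma_z:
  "i < 2 \<Longrightarrow> j < 2 \<Longrightarrow> sigma_z $$ (i, j) = (if i = j then (if i = 0 then 1 else -1) else 0)"
  by (auto simp: sigma_z_def mat_of_rows_list_def less_2_iff)

lemma transpose_sigma_z: "transpose_mat sigma_z = sigma_z"
  using sigma_z_carrier by (intro eq_matI) (auto simp: index_sigma_z)

lemma C_z_eq: "C_z = mat 4 4 (\<lambda>(r, c). if r = c \<and> (r = 1 \<or> r = 2) then 4 else 0)"
proof -
  have M: "kron2 sigma_z (1\<^sub>m 2) - kron2 (1\<^sub>m 2) (transpose_mat sigma_z)
    = mat 4 4 (\<lambda>(r, c). if r = c then (if r = 1 then 2 else if r = 2 then -2 else 0) else 0)"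
    by (rule eq_matI) (auto simp: transpose_sigma_z kron2_def index_sigma_z less_4_iff)
  show ?thesis
    unfolding C_z_def Let_def M
    by (rule eq_matI) (auto simp: scalar_prod_def atLeast0LessThan sum_lessThan_4 less_4_iff)
qed

lemma mtrace_mult_C_z:
  "P \<in> carrier_mat 4 4 \<Longrightarrow> mtrace (P * C_z) = 4 * (P $$ (1, 1) + P $$ (2, 2))"
  by (simp add: mtrace_def C_z_eq scalar_prod_def atLeast0LessThan sum_lessThan_4)

lemma one_smult_mat: "(1 :: 'a :: monoid_mult) \<cdot>\<^sub>m A = A"
  by (rule eq_matI) simp_all

lemma ptrace_dual_kron2:
  "A \<in> carrier_mat 2 2 \<Longrightarrow> B \<in> carrier_mat 2 2 \<Longrightarrow> ptrace_dual (kron2 A B) = mtrace B \<cdot>\<^sub>m A"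
  by (rule eq_matI) (auto simp: ptrace_dual_def kron2_def mtrace_def sum_lessThan_2 less_2_iff algebra_simps)

lemma ptrace_H_kron2:
  "A \<in> carrier_mat 2 2 \<Longrightarrow> B \<in> carrier_mat 2 2 \<Longrightarrow> ptrace_H (kron2 A B) = mtrace A \<cdot>\<^sub>m B"
  by (rule eq_matI) (auto simp: ptrace_H_def kron2_def mtrace_def sum_lessThan_2 less_2_iff algebra_simps)

lemma kron2_mem_couplings:
  assumes "density 2 \<rho>" "density 2 \<omega>"
  shows "kron2 \<omega> (transpose_mat \<rho>) \<in> couplings \<rho> \<omega>"
proof -
  have "\<rho> \<in> carrier_mat 2 2" "\<omega> \<in> carrier_mat 2 2" "mtrace \<rho> = 1" "mtrace \<omega> = 1"
    using assms by (simp_all add: density_def)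
  then show ?thesis
    unfolding couplings_def
    using density_kron2[OF assms(2) density_transpose[OF assms(1)]]
    by (simp add: ptrace_dual_kron2 ptrace_H_kron2 mtrace_transpose one_smult_mat)
qed

lemma couplings_diag:
  assumes "P \<in> couplings \<rho> \<omega>"
  shows "\<omega> $$ (0, 0) = P $$ (0, 0) + P $$ (1, 1)" "\<omega> $$ (1, 1) = P $$ (2, 2) + P $$ (3, 3)"
    and "\<rho> $$ (0, 0) = P $$ (0, 0) + P $$ (2, 2)" "\<rho> $$ (1, 1) = P $$ (1, 1) + P $$ (3, 3)"
proof -
  have \<omega>: "ptrace_dual P = \<omega>" and "ptrace_H P = transpose_mat \<rho>"
    using assms by (auto simp: couplings_def)
  then have "\<rho> = transpose_mat (ptrace_H P)" by simp
  then show "\<rho> $$ (0, 0) = P $$ (0, 0) + P $$ (2, 2)" "\<rho> $$ (1, 1) = P $$ (1, 1) + P $$ (3, 3)"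
    by (simp_all add: ptrace_H_def sum_lessThan_2 eval_nat_numeral)
  show "\<omega> $$ (0, 0) = P $$ (0, 0) + P $$ (1, 1)" "\<omega> $$ (1, 1) = P $$ (2, 2) + P $$ (3, 3)"
    unfolding \<omega>[symmetric] by (simp_all add: ptrace_dual_def sum_lessThan_2)
qed

lemma transport_cost_eq:
  "P \<in> couplings \<rho> \<omega> \<Longrightarrow> Re (mtrace (P * C_z)) = 4 * (Re (P $$ (1, 1)) + Re (P $$ (2, 2)))"
  by (simp add: couplings_def density_def mtrace_mult_C_z)

lemma transport_cost_nonneg: "P \<in> couplings \<rho> \<omega> \<Longrightarrow> 0 \<le> Re (mtrace (P * C_z))"
  using density_diag[of 4 P 1] density_diag[of 4 P 2]
  by (simp add: transport_cost_eq couplings_def)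

lemma bloch3_eq: "A \<in> carrier_mat 2 2 \<Longrightarrow> bloch3 A = Re (A $$ (0, 0)) - Re (A $$ (1, 1))"
  using sigma_z_carrier
  by (simp add: bloch3_def mtrace_def index_sigma_z scalar_prod_def atLeast0LessThan sum_lessThan_2)

lemma density2_bloch3: "density 2 A \<Longrightarrow> bloch3 A = 2 * Re (A $$ (0, 0)) - 1"
  using density2_trace[of A] by (simp add: bloch3_eq density_def)

lemma abs_bloch3_le_1: "density 2 A \<Longrightarrow> \<bar>bloch3 A\<bar> \<le> 1"
  using density2_bloch3[of A] density_diag[of 2 A 0] density_diag[of 2 A 1] density2_trace[of A]
  by auto

lemma Dz_sq_le:
  assumes \<rho>: "density 2 \<rho>" and \<omega>: "density 2 \<omega>"
  shows "Dz_sq \<rho> \<omega> \<le> 2 - 2 * bloch3 \<rho> * bloch3 \<omega>"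
proof -
  define P where "P = kron2 \<omega> (transpose_mat \<rho>)"
  have P: "P \<in> couplings \<rho> \<omega>"
    unfolding P_def using \<rho> \<omega> by (rule kron2_mem_couplings)
  have "\<rho> \<in> carrier_mat 2 2" using \<rho> by (simp add: density_def)
  then have "P $$ (1, 1) = \<omega> $$ (0, 0) * \<rho> $$ (1, 1)" "P $$ (2, 2) = \<omega> $$ (1, 1) * \<rho> $$ (0, 0)"
    by (simp_all add: P_def kron2_def)
  then have "Re (mtrace (P * C_z)) =
      4 * (Re (\<omega> $$ (0, 0)) * Re (\<rho> $$ (1, 1)) + Re (\<omega> $$ (1, 1)) * Re (\<rho> $$ (0, 0)))"
    using density_diag[OF \<rho>] density_diag[OF \<omega>] by (simp add: transport_cost_eq[OF P])
  also have "\<dots> = 2 - 2 * bloch3 \<rho> * bloch3 \<omega>"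
  proof -
    have t: "Re (\<rho> $$ (1, 1)) = 1 - Re (\<rho> $$ (0, 0))" "Re (\<omega> $$ (1, 1)) = 1 - Re (\<omega> $$ (0, 0))"
      using density2_trace[OF \<rho>] density2_trace[OF \<omega>] by linarith+
    show ?thesis
      unfolding density2_bloch3[OF \<rho>] density2_bloch3[OF \<omega>] t by (simp add: algebra_simps)
  qed
  finally have "Re (mtrace (P * C_z)) = 2 - 2 * bloch3 \<rho> * bloch3 \<omega>" .
  moreover have "Dz_sq \<rho> \<omega> \<le> Re (mtrace (P * C_z))"
    unfolding Dz_sq_def using P transport_cost_nonneg by (intro cInf_lower bdd_belowI) auto
  ultimately show ?thesis by simp
qed

lemma Dz_sq_ge:
  assumes \<rho>: "density 2 \<rho>" and \<omega>: "density 2 \<omega>"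
  shows "2 * \<bar>bloch3 \<rho> - bloch3 \<omega>\<bar> \<le> Dz_sq \<rho> \<omega>"
  unfolding Dz_sq_def
proof (rule cInf_greatest)
  show "(\<lambda>P. Re (mtrace (P * C_z))) ` couplings \<rho> \<omega> \<noteq> {}"
    using kron2_mem_couplings[OF \<rho> \<omega>] by blast
next
  fix c assume "c \<in> (\<lambda>P. Re (mtrace (P * C_z))) ` couplings \<rho> \<omega>"
  then obtain P where P: "P \<in> couplings \<rho> \<omega>" and c: "c = Re (mtrace (P * C_z))" by blast
  have "density 4 P" using P by (simp add: couplings_def)
  \<comment> \<open>Both marginals share the entry P(0,0), so their difference is P(2,2) - P(1,1).\<close>
  have "bloch3 \<rho> - bloch3 \<omega> = 2 * (Re (P $$ (2, 2)) - Re (P $$ (1, 1)))"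
    using couplings_diag[OF P] by (simp add: density2_bloch3[OF \<rho>] density2_bloch3[OF \<omega>])
  moreover have "0 \<le> Re (P $$ (1, 1))" "0 \<le> Re (P $$ (2, 2))"
    using density_diag(2)[OF \<open>density 4 P\<close>] by simp_all
  ultimately show "2 * \<bar>bloch3 \<rho> - bloch3 \<omega>\<bar> \<le> c"
    unfolding c transport_cost_eq[OF P] by (simp add: abs_if)
qed

definition spin_up :: "complex mat" where
  "spin_up = (1/2) \<cdot>\<^sub>m (1\<^sub>m 2 + sigma_z)"

definition spin_down :: "complex mat" where
  "spin_down = (1/2) \<cdot>\<^sub>m (1\<^sub>m 2 - sigma_z)"

lemma spin_up_eq: "spin_up = mat 2 2 (\<lambda>(i, j). if i = 0 \<and> j = 0 then 1 else 0)"
  unfolding spin_up_def using sigma_z_carrier by (intro eq_matI) (auto simp: index_sigma_z less_2_iff)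

lemma spin_down_eq: "spin_down = mat 2 2 (\<lambda>(i, j). if i = 1 \<and> j = 1 then 1 else 0)"
  unfolding spin_down_def using sigma_z_carrier by (intro eq_matI) (auto simp: index_sigma_z less_2_iff)

lemma density_spin_up: "density 2 spin_up"
proof -
  have "conjugate v \<bullet> (spin_up *\<^sub>v v) = of_real ((cmod (v $ 0))\<^sup>2)" if "v \<in> carrier_vec 2" for v
    using that by (simp add: quadratic_form_2 spin_up_eq mult.commute flip: complex_norm_square)
  then show ?thesis
    by (simp add: density_def spin_up_eq mtrace_def sum_lessThan_2)
qed

lemma density_spin_down: "density 2 spin_down"
proof -
  have "conjugate v \<bullet> (spin_down *\<^sub>v v) = of_real ((cmod (v $ 1))\<^sup>2)" if "v \<in> carrier_vec 2" for v
    using that by (simp add: quadratic_form_2 spin_down_eq mult.commute flip: complex_norm_square)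
  then show ?thesis
    by (simp add: density_def spin_down_eq mtrace_def sum_lessThan_2)
qed

lemma bloch3_spin_up: "bloch3 spin_up = 1"
  by (simp add: bloch3_eq spin_up_eq)

lemma bloch3_spin_down: "bloch3 spin_down = -1"
  by (simp add: bloch3_eq spin_down_eq)

lemma density2_bloch3_eq_1:
  assumes A: "density 2 A" and "bloch3 A = 1"
  shows "A = spin_up"
proof -
  have "Re (A $$ (0, 0)) = 1" "Re (A $$ (1, 1)) = 0"
    using density2_bloch3[OF A] density2_trace[OF A] assms(2) by linarith+
  then have "A $$ (0, 0) = 1" "A $$ (1, 1) = 0" "A $$ (0, 1) = 0" "A $$ (1, 0) = 0"
    using density_diag(1)[OF A] density2_offdiag_eq_0[OF A] by (simp_all add: complex_eq_iff)
  moreover have "A \<in> carrier_mat 2 2" using A by (simp add: density_def)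
  ultimately show ?thesis by (intro eq_matI) (auto simp: spin_up_eq less_2_iff)
qed

lemma density2_bloch3_eq_neg_1:
  assumes A: "density 2 A" and "bloch3 A = -1"
  shows "A = spin_down"
proof -
  have "Re (A $$ (0, 0)) = 0" "Re (A $$ (1, 1)) = 1"
    using density2_bloch3[OF A] density2_trace[OF A] assms(2) by linarith+
  then have "A $$ (0, 0) = 0" "A $$ (1, 1) = 1" "A $$ (0, 1) = 0" "A $$ (1, 0) = 0"
    using density_diag(1)[OF A] density2_offdiag_eq_0[OF A] by (simp_all add: complex_eq_iff)
  moreover have "A \<in> carrier_mat 2 2" using A by (simp add: density_def)
  ultimately show ?thesis by (intro eq_matI) (auto simp: spin_down_eq less_2_iff)
qed

lemma neg_one_le_mult: "\<bar>x\<bar> \<le> 1 \<Longrightarrow> \<bar>y\<bar> \<le> 1 \<Longrightarrow> - 1 \<le> (x :: real) * y"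
  using abs_le_iff[of "x * y" 1] mult_le_one[of "\<bar>x\<bar>" "\<bar>y\<bar>"] by (simp add: abs_mult)

lemma mult_le_neg_one_cases:
  fixes x y :: real
  assumes "\<bar>x\<bar> \<le> 1" "\<bar>y\<bar> \<le> 1" "x * y \<le> - 1"
  shows "x = 1 \<and> y = - 1 \<or> x = - 1 \<and> y = 1"
proof -
  have "1 \<le> \<bar>x\<bar> * \<bar>y\<bar>" using assms(3) by (simp add: abs_mult[symmetric])
  moreover have "\<bar>x\<bar> * \<bar>y\<bar> \<le> \<bar>x\<bar>" "\<bar>x\<bar> * \<bar>y\<bar> \<le> \<bar>y\<bar>"
    using assms(1,2) by (simp_all add: mult_left_le mult_left_le_one_le)
  ultimately have "\<bar>x\<bar> = 1" "\<bar>y\<bar> = 1" using assms(1,2) by linarith+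
  with assms(3) show ?thesis by (auto simp: abs_if split: if_splits)
qed

lemma Dz_sq_bound_le_4:
  assumes "density 2 \<rho>" "density 2 \<omega>"
  shows "2 - 2 * bloch3 \<rho> * bloch3 \<omega> \<le> 4"
  using neg_one_le_mult[OF abs_bloch3_le_1 abs_bloch3_le_1, OF assms] by simp

lemma Dz_sq_eq_4_iff:
  assumes \<rho>: "density 2 \<rho>" and \<omega>: "density 2 \<omega>"
  shows "Dz_sq \<rho> \<omega> = 4 \<longleftrightarrow> {\<rho>, \<omega>} = {spin_up, spin_down}"
proof
  assume "Dz_sq \<rho> \<omega> = 4"
  then have "bloch3 \<rho> * bloch3 \<omega> \<le> - 1" using Dz_sq_le[OF \<rho> \<omega>] by simp
  then consider "bloch3 \<rho> = 1" "bloch3 \<omega> = - 1" | "bloch3 \<rho> = - 1" "bloch3 \<omega> = 1"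
    using mult_le_neg_one_cases abs_bloch3_le_1[OF \<rho>] abs_bloch3_le_1[OF \<omega>] by blast
  then show "{\<rho>, \<omega>} = {spin_up, spin_down}"
  proof cases
    case 1
    then show ?thesis using density2_bloch3_eq_1[OF \<rho>] density2_bloch3_eq_neg_1[OF \<omega>] by simp
  next
    case 2
    then show ?thesis using density2_bloch3_eq_neg_1[OF \<rho>] density2_bloch3_eq_1[OF \<omega>] by auto
  qed
next
  assume "{\<rho>, \<omega>} = {spin_up, spin_down}"
  then have "\<bar>bloch3 \<rho> - bloch3 \<omega>\<bar> = 2" "bloch3 \<rho> * bloch3 \<omega> = - 1"
    by (auto simp: doubleton_eq_iff bloch3_spin_up bloch3_spin_down)
  then show "Dz_sq \<rho> \<omega> = 4"
    using Dz_sq_le[OF \<rho> \<omega>] Dz_sq_ge[OF \<rho> \<omega>] by simp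
qed

lemma Dz_eq_2_iff_Dz_sq_eq_4: "Dz \<rho> \<omega> = 2 \<longleftrightarrow> Dz_sq \<rho> \<omega> = 4"
  unfolding Dz_def by (metis real_sqrt_eq_iff real_sqrt_four)

lemma Dz_le_2: "density 2 \<rho> \<Longrightarrow> density 2 \<omega> \<Longrightarrow> Dz \<rho> \<omega> \<le> 2"
  unfolding Dz_def using Dz_sq_le Dz_sq_bound_le_4
  by (metis order.trans real_sqrt_four real_sqrt_le_mono)

theorem mainTheorem4:
  shows "(\<forall>\<rho> \<omega>. density 2 \<rho> \<and> density 2 \<omega> \<longrightarrow>
            Dz_sq \<rho> \<omega> \<le> 2 - 2 * bloch3 \<rho> * bloch3 \<omega> \<and> 2 - 2 * bloch3 \<rho> * bloch3 \<omega> \<le> 4)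
       \<and> (\<forall>\<rho> \<omega>. density 2 \<rho> \<and> density 2 \<omega> \<longrightarrow>
            (Dz \<rho> \<omega> = 2 \<longleftrightarrow>
              {\<rho>, \<omega>} = {(1/2) \<cdot>\<^sub>m (1\<^sub>m 2 + sigma_z), (1/2) \<cdot>\<^sub>m (1\<^sub>m 2 - sigma_z)}))
       \<and> Sup {Dz \<rho> \<omega> | \<rho> \<omega>. density 2 \<rho> \<and> density 2 \<omega>} = 2"
  unfolding spin_up_def[symmetric] spin_down_def[symmetric]
proof (intro conjI allI impI)
  fix \<rho> \<omega> assume "density 2 \<rho> \<and> density 2 \<omega>"
  then show "Dz_sq \<rho> \<omega> \<le> 2 - 2 * bloch3 \<rho> * bloch3 \<omega>" "2 - 2 * bloch3 \<rho> * bloch3 \<omega> \<le> 4"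
    and "Dz \<rho> \<omega> = 2 \<longleftrightarrow> {\<rho>, \<omega>} = {spin_up, spin_down}"
    by (simp_all add: Dz_sq_le Dz_sq_bound_le_4 Dz_eq_2_iff_Dz_sq_eq_4 Dz_sq_eq_4_iff)
next
  have "Dz spin_up spin_down = 2"
    using Dz_sq_eq_4_iff[OF density_spin_up density_spin_down] by (simp add: Dz_eq_2_iff_Dz_sq_eq_4)
  show "Sup {Dz \<rho> \<omega> | \<rho> \<omega>. density 2 \<rho> \<and> density 2 \<omega>} = 2"
  proof (rule cSup_eq_maximum)
    show "2 \<in> {Dz \<rho> \<omega> | \<rho> \<omega>. density 2 \<rho> \<and> density 2 \<omega>}"
      using \<open>Dz spin_up spin_down = 2\<close> density_spin_up density_spin_down by force
  qed (auto simp: Dz_le_2)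
qed

end
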